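(* Let $K$ be a field of characteristic $0$, and let $a(z)=\sum_{i=0}^u a_iz^i$, $b(z)=\sum_{j=0}^v b_jz^j\in K[z]$ with $a_u\ne0$, $b_v\neq 0$. Put $w=\max\{u-2,v-1\}$ and assume $w\ge 0$, and that if $u-1=v$ then $a_u(k+u)+b_v\neq0$ for all integers $k\ge0$. Let $L=-a(z)\frac{d}{dz}+b(z)$ and let $f_0(z),\ldots,f_w(z)\in(1/z)K[[1/z]]$ be linearly independent over $K$ with $L\cdot f_j(z)\in K[z]$ for $0\le j\le w$. Assume moreover that (a) for every positive integer $n$, the polynomials $na'(z)+b(z)$ and $a(z)$ are coprime, and (b) if $u-1=v$, then $a_u((k+1)u+n)+b_v\ne0$ for all integers $k,n\ge0$. Then for every integer $n\ge0$, $\Delta_n(z)\in K\setminus\{0\}$.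
   Context: For $f=\sum_{k\ge0}f_k z^{-k-1}\in(1/z)K[[1/z]]$, $L\cdot f=-a(z)f'(z)+b(z)f(z)$ with termwise differentiation. The formal $f$-integration map $\varphi_f:K[t]\to K$ is the $K$-linear map with $\varphi_f(t^k)=f_k$ ($k\ge0$), extended $K[z]$-linearly to $K[z,t]\to K[z]$. Write $\varphi_j=\varphi_{f_j}$. For integers $n,\ell\ge0$ let $P_{n,\ell}(z)=\frac{1}{n!}\bigl(\frac{d}{dz}+\frac{b(z)}{a(z)}\bigr)^n\bigl(a(z)^n z^\ell\bigr)$ (the operator $\frac{d}{dz}+\frac{b}{a}$ applied $n$ times to $a^nz^\ell$; this is a polynomial), and $Q_{n,j,\ell}(z)=\varphi_j\bigl(\frac{P_{n,\ell}(z)-P_{n,\ell}(t)}{z-t}\bigr)\in K[z]$ for $0\le j\le w$. Then $\Delta_n(z)$ is the determinant of the $(w+2)\times(w+2)$ matrix whose first row is $(P_{n,0}(z),\ldots,P_{n,w+1}(z))$ and whose $(j+2)$-th row is $(Q_{n,j,0}(z),\ldots,Q_{n,j,w+1}(z))$ for $0\le j\le w$. *)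

theory Defs
  imports "HOL-Computational_Algebra.Polynomial" "HOL-Computational_Algebra.Fraction_Field"
    "Jordan_Normal_Form.Determinant"
begin

text \<open>A formal series f = sum_k f_k z^(-k-1) in (1/z)K[[1/z]] is represented by its
coefficient sequence (k \<mapsto> f_k).\<close>

text \<open>Coefficient of z^e (e an integer) in L f = -a f' + b f, computed termwise:
 -a f' = sum_{i,k} (k+1) a_i f_k z^(i-k-2),  b f = sum_{j,k} b_j f_k z^(j-k-1).\<close>
definition L_coeff :: "'a::field poly \<Rightarrow> 'a poly \<Rightarrow> (nat \<Rightarrow> 'a) \<Rightarrow> int \<Rightarrow> 'a" where
  "L_coeff a b f e =
     (\<Sum>i\<le>degree a. if int i - 2 - e \<ge> 0
        then of_nat (nat (int i - 2 - e) + 1) * coeff a i * f (nat (int i - 2 - e)) else 0)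
   + (\<Sum>j\<le>degree b. if int j - 1 - e \<ge> 0
        then coeff b j * f (nat (int j - 1 - e)) else 0)"

definition L_in_poly :: "'a::field poly \<Rightarrow> 'a poly \<Rightarrow> (nat \<Rightarrow> 'a) \<Rightarrow> bool" where
  "L_in_poly a b f \<longleftrightarrow> (\<forall>e<0. L_coeff a b f e = 0)"

definition fract_deriv :: "'a::field poly fract \<Rightarrow> 'a poly fract" where
  "fract_deriv x = (SOME y. \<exists>p q. q \<noteq> 0 \<and> x = Fract p q \<and>
       y = Fract (pderiv p * q - p * pderiv q) (q ^ 2))"

definition P_poly :: "'a::field_char_0 poly \<Rightarrow> 'a poly \<Rightarrow> nat \<Rightarrow> nat \<Rightarrow> 'a poly" where
  "P_poly a b n l = (THE p. Fract p 1 =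
      inverse (of_nat (fact n)) *
      ((\<lambda>x. fract_deriv x + Fract b a * x) ^^ n) (Fract (a ^ n * monom 1 l) 1))"

text \<open>Bivariate polynomials in K[z,t] are represented as polynomials in t with coefficients
in K[z] (type 'a poly poly). The divided difference (P(z)-P(t))/(z-t):\<close>
definition div_diff :: "'a::field poly \<Rightarrow> 'a poly poly" where
  "div_diff P = ([:P:] - map_poly (\<lambda>c. [:c:]) P) div [:[:0, 1:], -1:]"

definition phi :: "(nat \<Rightarrow> 'a::field) \<Rightarrow> 'a poly poly \<Rightarrow> 'a poly" where
  "phi f Q = (\<Sum>k\<le>degree Q. smult (f k) (coeff Q k))"

definition Q_poly :: "'a::field_char_0 poly \<Rightarrow> 'a poly \<Rightarrow> (nat \<Rightarrow> 'a) \<Rightarrow> nat \<Rightarrow> nat \<Rightarrow> 'a poly" where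
  "Q_poly a b fj n l = phi fj (div_diff (P_poly a b n l))"

definition Delta :: "'a::field_char_0 poly \<Rightarrow> 'a poly \<Rightarrow> nat \<Rightarrow> (nat \<Rightarrow> nat \<Rightarrow> 'a) \<Rightarrow> nat \<Rightarrow> 'a poly" where
  "Delta a b w f n = det (mat (w + 2) (w + 2)
     (\<lambda>(i, l). if i = 0 then P_poly a b n l else Q_poly a b (f (i - 1)) n l))"

end

theory Submission
  imports Defs
begin

text \<open>
  For a coefficient sequence f let psi_f(p) = sum_k f_k p_k. Since L f_j is a polynomial,
  psi_j vanishes on the image of the adjoint operator D q = (a q)' + b q. As P_{n,l} is an
  n-fold iterate of operators of this kind applied to z^l, integration by parts gives
  psi_j(z^s P_{n,l}) = 0 for s < n and psi_j(z^n P_{n,l}) = (-1)^n psi_j(a^n z^l), while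
  condition (b) gives deg P_{n,l} = l + n (w + 1).

  Let d = (n + 1) (w + 1) and N = d + n + 1. Multiplying the rows j >= 1 of the matrix by z^N
  and subtracting the polynomial part of z^N f_j(z) times the first row turns Q_{n,j,l} into a
  remainder whose coefficient of z^e, for e >= d, is -psi_j(z^(N-1-e) P_{n,l}). So all entries
  have degree at most d, and z^(N (w+1)) Delta_n has degree at most (w + 2) d = N (w + 1), with
  top coefficient, up to sign, lead_coeff P_{n,w+1} times det (psi_j(a^n z^l))_{j,l <= w}.

  This determinant does not vanish: a kernel vector gives p ~= 0 with deg p <= w and
  psi_j(a^n p) = 0 for all j. Write a^n p = D q + r with deg r <= w. A sequence annihilating
  the image of D is determined by its first w + 1 terms, so linear independence of the f_j
  forces r = 0; and a^n p = D q is impossible by condition (a), which lets one divide q by a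
  repeatedly. Hence Delta_n is a nonzero constant.
\<close>

section \<open>The moment functional\<close>

definition moment_functional :: "(nat \<Rightarrow> 'a::comm_semiring_0) \<Rightarrow> 'a poly \<Rightarrow> 'a" where
  "moment_functional f p = (\<Sum>k\<le>degree p. f k * coeff p k)"

lemma moment_functional_altdef:
  assumes "degree p \<le> n"
  shows "moment_functional f p = (\<Sum>k\<le>n. f k * coeff p k)"
  unfolding moment_functional_def
  by (rule sum.mono_neutral_left) (use assms in \<open>auto simp: coeff_eq_0\<close>)

lemma moment_functional_0 [simp]: "moment_functional f 0 = 0"
  by (simp add: moment_functional_def)

lemma moment_functional_add:
  "moment_functional f (p + q) = moment_functional f p + moment_functional f q"
proof -
  have "degree (p + q) \<le> max (degree p) (degree q)"
    by (rule degree_add_le) auto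
  then show ?thesis
    by (simp add: moment_functional_altdef[of _ "max (degree p) (degree q)"] sum.distrib
        distrib_left)
qed

lemma moment_functional_smult:
  "moment_functional f (smult c p) = c * moment_functional f p"
  using degree_smult_le[of c p]
  by (simp add: moment_functional_altdef[of _ "degree p"] sum_distrib_left ac_simps)

lemma moment_functional_diff:
  fixes f :: "nat \<Rightarrow> 'a::comm_ring_1"
  shows "moment_functional f (p - q) = moment_functional f p - moment_functional f q"
  using moment_functional_add[of f p "-q"] moment_functional_smult[of f "-1" q] by simp

lemma moment_functional_sum:
  "moment_functional f (\<Sum>i\<in>I. p i) = (\<Sum>i\<in>I. moment_functional f (p i))"
  by (induction I rule: infinite_finite_induct) (auto simp: moment_functional_add)

lemma moment_functional_monom: "moment_functional f (monom c d) = f d * c"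
proof -
  have "moment_functional f (monom c d) = (\<Sum>k\<le>d. if k = d then f d * c else 0)"
    unfolding moment_functional_altdef[OF degree_monom_le] by (rule sum.cong) (auto simp: coeff_monom)
  then show ?thesis
    by simp
qed

lemma moment_functional_lincomb:
  "moment_functional (\<lambda>k. \<Sum>j\<in>J. c j * f j k) p = (\<Sum>j\<in>J. c j * moment_functional (f j) p)"
  unfolding moment_functional_def sum_distrib_right sum_distrib_left
  by (subst sum.swap) (simp add: mult.assoc)

section \<open>The operators \<open>D_op\<close>\<close>

lemma pderiv_sum: "pderiv (\<Sum>i\<in>I. p i) = (\<Sum>i\<in>I. pderiv (p i))"
  by (induction I rule: infinite_finite_induct) (auto simp: pderiv_add)

text \<open>(d/dz + b/a) (a^c q) = a^(c-1) D_op a b c q, and D_op a b 1 is the adjoint of L with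
  respect to moment_functional (see moment_functional_D_op_monom).\<close>

definition D_op :: "'a::idom poly \<Rightarrow> 'a poly \<Rightarrow> nat \<Rightarrow> 'a poly \<Rightarrow> 'a poly" where
  "D_op a b c q = a * pderiv q + (smult (of_nat c) (pderiv a) + b) * q"

lemma D_op_add: "D_op a b c (p + q) = D_op a b c p + D_op a b c q"
  by (simp add: D_op_def pderiv_add smult_add_right algebra_simps)

lemma D_op_smult: "D_op a b c (smult x p) = smult x (D_op a b c p)"
  by (simp add: D_op_def pderiv_smult smult_add_right)

lemma D_op_0 [simp]: "D_op a b c 0 = 0"
  by (simp add: D_op_def)

lemma D_op_sum: "D_op a b c (\<Sum>i\<in>I. p i) = (\<Sum>i\<in>I. D_op a b c (p i))"
  by (induction I rule: infinite_finite_induct) (auto simp: D_op_add)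

lemma D_op_1_eq: "D_op a b 1 q = pderiv (a * q) + b * q"
  by (simp add: D_op_def pderiv_mult algebra_simps)

lemma D_op_mult_power: "D_op a b c (a ^ m * q) = a ^ m * D_op a b (c + m) q"
proof (induction m arbitrary: c)
  case (Suc m)
  have "D_op a b c (a * r) = a * D_op a b (Suc c) r" for c r
    by (simp add: D_op_def pderiv_mult smult_add_left algebra_simps)
  from this[of c "a ^ m * q"] Suc[of "Suc c"] show ?case
    by (simp add: mult.assoc)
qed simp

lemma mult_D_op_1: "q * D_op a b 1 g = D_op a b 1 (q * g) - a * pderiv q * g"
  by (simp add: D_op_def pderiv_mult algebra_simps)

lemma moment_functional_D_op_monom:
  fixes a b :: "'a::field_char_0 poly"
  shows "moment_functional f (D_op a b 1 (monom 1 m)) = L_coeff a b f (- int m - 1)"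
proof -
  have "L_coeff a b f (- int m - 1) =
      (\<Sum>i\<le>degree a. f (i + m - 1) * (of_nat (i + m) * coeff a i)) +
      (\<Sum>j\<le>degree b. f (j + m) * coeff b j)"
    unfolding L_coeff_def
  proof (intro arg_cong2[where f = "(+)"] sum.cong refl)
    fix i
    show "(if int i - 2 - (- int m - 1) \<ge> 0 then of_nat (nat (int i - 2 - (- int m - 1)) + 1) *
          coeff a i * f (nat (int i - 2 - (- int m - 1))) else 0) =
        f (i + m - 1) * (of_nat (i + m) * coeff a i)"
    proof (cases "i + m = 0")
      case False
      then have "nat (int i - 2 - (- int m - 1)) = i + m - 1" "int i - 2 - (- int m - 1) \<ge> 0"
          "i + m - 1 + 1 = i + m"
        by linarith+
      then show ?thesis
        by (simp add: ac_simps)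
    qed simp
  qed (auto simp: nat_add_distrib)
  moreover have "a * monom 1 m = (\<Sum>i\<le>degree a. monom (coeff a i) (i + m))"
    by (subst (1) poly_as_sum_of_monoms[symmetric, of a]) (simp add: sum_distrib_right mult_monom)
  moreover have "b * monom 1 m = (\<Sum>j\<le>degree b. monom (coeff b j) (j + m))"
    by (subst (1) poly_as_sum_of_monoms[symmetric, of b]) (simp add: sum_distrib_right mult_monom)
  ultimately show ?thesis
    unfolding D_op_1_eq by (simp add: moment_functional_add moment_functional_sum moment_functional_monom
        pderiv_sum pderiv_monom)
qed

lemma moment_functional_D_op_eq_0:
  fixes a b :: "'a::field_char_0 poly"
  assumes "L_in_poly a b f"
  shows "moment_functional f (D_op a b 1 q) = 0"
proof -
  have "q = (\<Sum>m\<le>degree q. smult (coeff q m) (monom 1 m))"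
    by (simp add: smult_monom poly_as_sum_of_monoms)
  then have "D_op a b 1 q = (\<Sum>m\<le>degree q. smult (coeff q m) (D_op a b 1 (monom 1 m)))"
    by (metis (no_types, lifting) D_op_smult D_op_sum sum.cong)
  then have "moment_functional f (D_op a b 1 q) =
      (\<Sum>m\<le>degree q. coeff q m * L_coeff a b f (- int m - 1))"
    by (simp only: moment_functional_sum moment_functional_smult moment_functional_D_op_monom)
  also have "\<dots> = 0"
    using assms unfolding L_in_poly_def by (intro sum.neutral) auto
  finally show ?thesis .
qed

lemma coeff_mult_degree_bound_sum:
  fixes p q :: "'a::idom poly"
  assumes "degree p \<le> m" "degree q \<le> n"
  shows "coeff (p * q) (m + n) = coeff p m * coeff q n"
proof (cases "degree p = m \<and> degree q = n")
  case True
  then show ?thesis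
    using coeff_mult_degree_sum[of p q] by simp
next
  case False
  then have "degree p < m \<or> degree q < n"
    using assms by auto
  moreover have "degree (p * q) \<le> degree p + degree q"
    by (rule degree_mult_le)
  ultimately show ?thesis
    using assms by (auto simp: coeff_eq_0)
qed

lemma degree_D_op_le:
  fixes a b q :: "'a::field_char_0 poly"
  assumes "degree a \<le> d + 1" "degree b \<le> d"
  shows "degree (D_op a b c q) \<le> degree q + d"
proof -
  have "degree (a * pderiv q) \<le> degree q + d"
  proof (cases "degree q = 0")
    case False
    then show ?thesis
      using degree_mult_le[of a "pderiv q"] assms(1) by (simp add: degree_pderiv)
  qed (simp add: iffD2[OF pderiv_eq_0_iff])
  moreover have "degree (smult (of_nat c) (pderiv a) + b) \<le> d"
    using assms degree_smult_le[of "of_nat c" "pderiv a"]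
    by (intro degree_add_le) (auto simp: degree_pderiv)
  then have "degree ((smult (of_nat c) (pderiv a) + b) * q) \<le> degree q + d"
    using degree_mult_le[of "smult (of_nat c) (pderiv a) + b" q] by linarith
  ultimately show ?thesis
    unfolding D_op_def by (intro degree_add_le)
qed

lemma coeff_D_op_top:
  fixes a b q :: "'a::field_char_0 poly"
  assumes "degree a \<le> d + 1" "degree b \<le> d"
  shows "coeff (D_op a b c q) (degree q + d) =
    lead_coeff q * (coeff a (d + 1) * of_nat (degree q + c * (d + 1)) + coeff b d)"
proof -
  have a_part: "coeff (a * pderiv q) (degree q + d) = coeff a (d + 1) * of_nat (degree q) * lead_coeff q"
  proof (cases "degree q = 0")
    case False
    then have "degree q + d = (d + 1) + (degree q - 1)"
      by simp
    also have "coeff (a * pderiv q) \<dots> = coeff a (d + 1) * coeff (pderiv q) (degree q - 1)"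
      using assms(1) by (intro coeff_mult_degree_bound_sum) (auto simp: degree_pderiv)
    finally show ?thesis
      using False by (simp add: coeff_pderiv mult.assoc)
  qed (simp add: iffD2[OF pderiv_eq_0_iff])
  have "degree (smult (of_nat c) (pderiv a) + b) \<le> d"
    using assms degree_smult_le[of "of_nat c" "pderiv a"]
    by (intro degree_add_le) (auto simp: degree_pderiv)
  from coeff_mult_degree_bound_sum[OF this order_refl, of q]
  have "coeff ((smult (of_nat c) (pderiv a) + b) * q) (degree q + d) =
      (of_nat c * (of_nat (d + 1) * coeff a (d + 1)) + coeff b d) * lead_coeff q"
    by (simp add: coeff_pderiv add.commute)
  with a_part show ?thesis
    by (simp add: D_op_def algebra_simps)
qed

lemma degree_D_op:
  fixes a b q :: "'a::field_char_0 poly"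
  assumes "degree a \<le> d + 1" "degree b \<le> d" "q \<noteq> 0"
    and "coeff a (d + 1) * of_nat (degree q + c * (d + 1)) + coeff b d \<noteq> 0"
  shows "degree (D_op a b c q) = degree q + d"
  using degree_D_op_le[OF assms(1,2)] coeff_D_op_top[OF assms(1,2)] assms(3,4)
  by (metis le_antisym le_degree leading_coeff_0_iff mult_eq_0_iff)

section \<open>Bezout's lemma for polynomials over a field\<close>

text \<open>For a general field 'a the type 'a poly is not a semiring_gcd instance, so Euclid's lemma
  is derived here from the division algorithm.\<close>

lemma poly_bezout_divisor:
  fixes x y :: "'a::field poly"
  shows "\<exists>s t. (s * x + t * y) dvd x \<and> (s * x + t * y) dvd y"
proof (induction "degree y + (if y = 0 then 0 else 1)" arbitrary: x y rule: less_induct)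
  case less
  show ?case
  proof (cases "y = 0")
    case True
    then show ?thesis
      by (intro exI[of _ 1] exI[of _ 0]) simp
  next
    case False
    then have "degree (x mod y) + (if x mod y = 0 then 0 else 1) < degree y + 1"
      using degree_mod_less[OF False, of x] by auto
    with False obtain s t where st: "(s * y + t * (x mod y)) dvd y" "(s * y + t * (x mod y)) dvd (x mod y)"
      using less[of "x mod y" y] by auto
    have "s * y + t * (x mod y) = t * x + (s - t * (x div y)) * y"
      by (simp add: minus_div_mult_eq_mod[symmetric] algebra_simps)
    moreover have "(s * y + t * (x mod y)) dvd x"
      using st by (metis div_mult_mod_eq dvd_add dvd_mult)
    ultimately show ?thesis
      using st(1) by metis
  qed
qed

lemma coprime_dvd_mult_poly:
  fixes x y q :: "'a::field poly"
  assumes "coprime x y" "y dvd x * q"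
  shows "y dvd q"
proof -
  obtain s t where "(s * x + t * y) dvd x" "(s * x + t * y) dvd y"
    using poly_bezout_divisor by blast
  with assms(1) have "is_unit (s * x + t * y)"
    by (rule coprime_common_divisor)
  moreover have "y dvd s * (x * q) + t * q * y"
    by (rule dvd_add[OF dvd_mult[OF assms(2)] dvd_triv_right])
  then have "y dvd (s * x + t * y) * q"
    by (simp add: algebra_simps)
  ultimately show ?thesis
    by (metis dvd_mult_unit_iff mult.commute)
qed

section \<open>Iterates of \<open>D_op\<close> and the polynomials \<open>P_poly\<close>\<close>

fun D_chain :: "'a::idom poly \<Rightarrow> 'a poly \<Rightarrow> nat \<Rightarrow> nat \<Rightarrow> 'a poly \<Rightarrow> 'a poly" where
  "D_chain a b c 0 q = q"
| "D_chain a b c (Suc k) q = D_chain a b c k (D_op a b (c + k) q)"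

lemma D_chain_Suc_outer: "D_chain a b c (Suc k) q = D_op a b c (D_chain a b (Suc c) k q)"
  by (induction k arbitrary: c q) (simp_all add: add.commute add.left_commute)

lemma fract_deriv_Fract_1: "fract_deriv (Fract p 1) = Fract (pderiv p) (1 :: 'a::field poly)"
  unfolding fract_deriv_def
proof (rule someI2_ex)
  show "\<exists>y p' q. q \<noteq> 0 \<and> Fract p 1 = Fract p' q \<and> y = Fract (pderiv p' * q - p' * pderiv q) (q ^ 2)"
    by (intro exI[of _ p] exI[of _ 1] exI) simp
next
  fix y
  assume "\<exists>p' q. q \<noteq> 0 \<and> Fract p 1 = Fract p' q \<and> y = Fract (pderiv p' * q - p' * pderiv q) (q ^ 2)"
  then obtain p' q where "q \<noteq> 0" "p' = p * q" "y = Fract (pderiv p' * q - p' * pderiv q) (q ^ 2)"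
    by (auto simp: eq_fract)
  then show "y = Fract (pderiv p) 1"
    by (simp add: eq_fract pderiv_mult algebra_simps power2_eq_square)
qed

lemma iterate_Fract_power_mult:
  fixes a b :: "'a::field poly"
  assumes "a \<noteq> 0"
  shows "((\<lambda>x. fract_deriv x + Fract b a * x) ^^ k) (Fract (a ^ (m + k) * q) 1) =
    Fract (a ^ m * D_chain a b (Suc m) k q) 1"
proof (induction k arbitrary: m q)
  case (Suc k)
  have "fract_deriv (Fract (a * g) 1) + Fract b a * Fract (a * g) 1 = Fract (D_op a b 1 g) 1" for g
    using assms unfolding D_op_1_eq by (simp add: fract_deriv_Fract_1 eq_fract add_fract algebra_simps)
  from this[of "a ^ (m + k) * q"] Suc[of m "D_op a b (Suc (m + k)) q"] show ?case
    by (simp add: funpow_Suc_right D_op_mult_power mult.assoc del: funpow.simps)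
qed simp

lemma P_poly_eq_D_chain:
  fixes a b :: "'a::field_char_0 poly"
  assumes "a \<noteq> 0"
  shows "P_poly a b n l = smult (inverse (fact n)) (D_chain a b 1 n (monom 1 l))"
proof -
  have "((\<lambda>x. fract_deriv x + Fract b a * x) ^^ n) (Fract (a ^ n * monom 1 l) 1) =
      Fract (D_chain a b 1 n (monom 1 l)) 1"
    using iterate_Fract_power_mult[OF assms, where k = n and m = 0] by simp
  then have "inverse (of_nat (fact n)) *
      ((\<lambda>x. fract_deriv x + Fract b a * x) ^^ n) (Fract (a ^ n * monom 1 l) 1) =
      Fract (smult (inverse (fact n)) (D_chain a b 1 n (monom 1 l))) 1"
    by (simp add: of_nat_fract eq_fract of_nat_poly)
  then show ?thesis
    unfolding P_poly_def by (intro the_equality) (simp_all add: eq_fract)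
qed

text \<open>Repeated integration by parts against psi_f.\<close>

lemma moment_functional_mult_D_chain:
  assumes "\<And>q. moment_functional f (D_op a b 1 q) = 0"
  shows "moment_functional f (q * (a ^ m * D_chain a b (Suc m) k h)) =
    (-1) ^ k * moment_functional f ((pderiv ^^ k) q * (a ^ (m + k) * h))"
proof (induction k arbitrary: q m)
  case (Suc k)
  define g where "g = D_chain a b (Suc (Suc m)) k h"
  have "a ^ m * D_chain a b (Suc m) (Suc k) h = D_op a b 1 (a ^ m * g)"
    unfolding g_def D_chain_Suc_outer D_op_mult_power by simp
  then have "q * (a ^ m * D_chain a b (Suc m) (Suc k) h) =
      D_op a b 1 (q * (a ^ m * g)) - pderiv q * (a ^ Suc m * g)"
    by (simp only: mult_D_op_1) (simp add: algebra_simps)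
  with assms Suc[of "pderiv q" "Suc m"] show ?case
    unfolding g_def by (simp add: moment_functional_diff funpow_Suc_right del: funpow.simps)
qed simp

lemma higher_pderiv_monom_1:
  assumes "s \<le> n"
  shows "(pderiv ^^ n) (monom (1 :: 'a::field_char_0) s) = (if s < n then 0 else [:fact n:])"
proof (rule poly_eqI)
  fix i
  show "coeff ((pderiv ^^ n) (monom 1 s)) i = coeff (if s < n then 0 else [:fact n:]) i"
    using assms by (auto simp: coeff_higher_pderiv coeff_monom coeff_pCons pochhammer_fact
        split: nat.split)
qed

section \<open>Divided differences and remainders\<close>

lemma coeff_div_diff: "coeff (div_diff P) k = poly_shift (Suc k) P"
proof -
  define G where "G = Abs_poly (\<lambda>k. poly_shift (Suc k) P)"
  have "poly_shift (Suc k) P = 0" if "degree P < k" for k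
    using that by (intro poly_eqI) (simp add: coeff_poly_shift coeff_eq_0)
  then have coeff_G: "coeff G k = poly_shift (Suc k) P" for k
    unfolding G_def by (subst coeff_Abs_poly) blast+
  have eq: "[:P:] - map_poly (\<lambda>c. [:c:]) P = [:[:0, 1:], -1:] * G"
  proof (intro poly_eqI)
    fix m e
    have "coeff ([:[:0, 1:], -1:] * G) m =
        pCons 0 (coeff G m) - (if m = 0 then 0 else coeff G (m - 1))"
      by (cases m) (simp_all add: coeff_pCons)
    then show "coeff (coeff ([:P:] - map_poly (\<lambda>c. [:c:]) P) m) e =
        coeff (coeff ([:[:0, 1:], -1:] * G) m) e"
      by (cases e; cases m) (simp_all add: coeff_G coeff_poly_shift coeff_pCons coeff_map_poly)
  qed
  have "div_diff P = G"
    unfolding div_diff_def eq by (intro nonzero_mult_div_cancel_left) simp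
  then show ?thesis
    by (simp add: coeff_G)
qed

lemma degree_div_diff_le: "degree (div_diff P) \<le> degree P"
  by (rule degree_le) (auto simp: coeff_div_diff poly_eq_iff coeff_poly_shift coeff_eq_0)

lemma phi_altdef:
  assumes "degree Q \<le> M"
  shows "phi f Q = (\<Sum>k\<le>M. smult (f k) (coeff Q k))"
  unfolding phi_def
  by (rule sum.mono_neutral_left) (use assms in \<open>auto simp: coeff_eq_0\<close>)

lemma coeff_phi_div_diff:
  assumes "degree P \<le> M"
  shows "coeff (phi f (div_diff P)) e = (\<Sum>k\<le>M. f k * coeff P (e + Suc k))"
  using order_trans[OF degree_div_diff_le assms]
  by (simp add: phi_altdef[of _ M] coeff_sum coeff_div_diff coeff_poly_shift)

text \<open>The polynomial part of z^N f(z) for f(z) = sum_k f_k z^(-k-1).\<close>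

definition series_trunc :: "(nat \<Rightarrow> 'a::comm_semiring_1) \<Rightarrow> nat \<Rightarrow> 'a poly" where
  "series_trunc f N = (\<Sum>k<N. monom (f k) (N - 1 - k))"

lemma coeff_series_trunc_mult:
  "coeff (series_trunc f N * P) e =
    (\<Sum>k<N. if N \<le> e + Suc k then f k * coeff P (e + Suc k - N) else 0)"
  unfolding series_trunc_def sum_distrib_right coeff_sum
proof (intro sum.cong refl)
  fix k
  assume "k \<in> {..<N}"
  then have "(e < N - 1 - k) = (\<not> N \<le> e + Suc k)" "e - (N - 1 - k) = e + Suc k - N"
    by auto
  then show "coeff (monom (f k) (N - 1 - k) * P) e =
      (if N \<le> e + Suc k then f k * coeff P (e + Suc k - N) else 0)"
    by (simp add: coeff_monom_mult)
qed

text \<open>phi f (div_diff P) is the polynomial part of f P, so this is -z^N times the remainder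
  f P - [f P]_+, up to the tail of z^N f, which only affects degrees below deg P.\<close>

lemma coeff_remainder:
  fixes f :: "nat \<Rightarrow> 'a::field"
  assumes "degree P \<le> e"
  shows "coeff (monom 1 N * phi f (div_diff P) - series_trunc f N * P) e =
    (if e < N then - moment_functional f (monom 1 (N - 1 - e) * P) else 0)"
proof -
  define g where "g k = (if N \<le> e + Suc k then f k * coeff P (e + Suc k - N) else 0)" for k
  have "coeff (series_trunc f N * P) e = (\<Sum>k<N. g k)"
    by (simp add: coeff_series_trunc_mult g_def)
  also have "\<dots> = (\<Sum>k\<le>N + e. g k)"
    using assms by (intro sum.mono_neutral_left) (auto simp: g_def coeff_eq_0)
  finally have trunc: "coeff (series_trunc f N * P) e = (\<Sum>k\<le>N + e. g k)" .
  show ?thesis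
  proof (cases "e < N")
    case True
    have "degree (monom 1 (N - 1 - e) * P) \<le> N + e"
      using degree_mult_le[of "monom (1::'a) (N - 1 - e)" P] degree_monom_le[of "1::'a" "N - 1 - e"]
        assms by linarith
    then have "moment_functional f (monom 1 (N - 1 - e) * P) =
        (\<Sum>k\<le>N + e. f k * coeff (monom 1 (N - 1 - e) * P) k)"
      by (rule moment_functional_altdef)
    also have "\<dots> = (\<Sum>k\<le>N + e. g k)"
    proof (intro sum.cong refl)
      fix k
      have "(k < N - 1 - e) = (\<not> N \<le> e + Suc k)" "k - (N - 1 - e) = e + Suc k - N"
        using True by auto
      then show "f k * coeff (monom 1 (N - 1 - e) * P) k = g k"
        by (simp add: g_def coeff_monom_mult)
    qed
    finally show ?thesis
      using True by (simp add: coeff_monom_mult trunc)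
  next
    case False
    have "coeff (phi f (div_diff P)) (e - N) = (\<Sum>k\<le>N + e. f k * coeff P (e - N + Suc k))"
      using assms by (intro coeff_phi_div_diff) simp
    also have "\<dots> = (\<Sum>k\<le>N + e. g k)"
      using False by (intro sum.cong refl) (simp add: g_def Suc_diff_le)
    finally show ?thesis
      using False by (simp add: coeff_monom_mult trunc)
  qed
qed

section \<open>Determinants of polynomial matrices\<close>

lemma coeff_prod_degree_bound:
  fixes g :: "'b \<Rightarrow> 'a::idom poly"
  assumes "\<And>i. i \<in> I \<Longrightarrow> degree (g i) \<le> d"
  shows "coeff (prod g I) (card I * d) = (\<Prod>i\<in>I. coeff (g i) d)"
  using assms
proof (induction I rule: infinite_finite_induct)
  case (insert x F)
  have "degree (prod g F) \<le> card F * d"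
    using degree_prod_sum_le[OF insert.hyps(1), of g] sum_bounded_above[of F "degree \<circ> g" d]
      insert.prems by fastforce
  then have "coeff (g x * prod g F) (d + card F * d) = coeff (g x) d * coeff (prod g F) (card F * d)"
    using insert.prems by (intro coeff_mult_degree_bound_sum) auto
  with insert show ?case
    by simp
qed simp_all

lemma coeff_det_degree_bound:
  fixes B :: "'a::idom poly mat"
  assumes B: "B \<in> carrier_mat m m"
    and deg: "\<And>i j. i < m \<Longrightarrow> j < m \<Longrightarrow> degree (B $$ (i, j)) \<le> d"
  shows "coeff (det B) (m * d) = det (map_mat (\<lambda>p. coeff p d) B)"
proof -
  have "coeff (det B) (m * d) =
      (\<Sum>p | p permutes {0..<m}. signof p * (\<Prod>i = 0..<m. coeff (B $$ (i, p i)) d))"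
    unfolding det_def'[OF B] coeff_sum
  proof (intro sum.cong refl)
    fix p
    assume "p \<in> {p. p permutes {0..<m}}"
    then have "coeff (\<Prod>i = 0..<m. B $$ (i, p i)) (card {0..<m} * d) =
        (\<Prod>i = 0..<m. coeff (B $$ (i, p i)) d)"
      using deg permutes_in_image[of p "{0..<m}"] by (intro coeff_prod_degree_bound) auto
    then show "coeff (signof p * (\<Prod>i = 0..<m. B $$ (i, p i))) (m * d) =
        signof p * (\<Prod>i = 0..<m. coeff (B $$ (i, p i)) d)"
      by (simp add: of_int_poly)
  qed
  also have "\<dots> = det (map_mat (\<lambda>p. coeff p d) B)"
    unfolding det_def'[of "map_mat (\<lambda>p. coeff p d) B" m, OF map_carrier_mat[THEN iffD2, OF B]]
  proof (intro sum.cong refl arg_cong2[where f = "(*)"] prod.cong)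
    fix p i
    assume "p \<in> {p. p permutes {0..<m}}" "i \<in> {0..<m}"
    then show "coeff (B $$ (i, p i)) d = map_mat (\<lambda>p. coeff p d) B $$ (i, p i)"
      using B permutes_in_image[of p "{0..<m}"] by auto
  qed
  finally show ?thesis .
qed

lemma det_scale_rows_sub_first_row:
  fixes A B :: "'a::comm_ring_1 mat"
  assumes A: "A \<in> carrier_mat m m" and B: "B \<in> carrier_mat m m"
    and row0: "\<And>l. l < m \<Longrightarrow> B $$ (0, l) = A $$ (0, l)"
    and rows: "\<And>i l. 0 < i \<Longrightarrow> i < m \<Longrightarrow> l < m \<Longrightarrow> B $$ (i, l) = c * A $$ (i, l) - g i * A $$ (0, l)"
  shows "det B = c ^ (m - 1) * det A"
proof -
  define S where "S = mat m m (\<lambda>(i, j). if i = j then (if i = 0 then 1 else c) else 0)"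
  define E where "E = mat m m (\<lambda>(i, j). if i = j then 1 else if j = 0 then g i else 0)"
  have S: "S \<in> carrier_mat m m" and E: "E \<in> carrier_mat m m"
    by (simp_all add: S_def E_def)
  have "S * A = E * B"
  proof (rule eq_matI)
    fix i l
    assume "i < dim_row (E * B)" "l < dim_col (E * B)"
    then have i: "i < m" and l: "l < m"
      using E B by auto
    have "(S * A) $$ (i, l) = (\<Sum>k = 0..<m. S $$ (i, k) * A $$ (k, l))"
      using i l S A by (simp add: scalar_prod_def)
    also have "\<dots> = (\<Sum>k = 0..<m. (if k = i then (if i = 0 then 1 else c) * A $$ (i, l) else 0))"
      using i by (intro sum.cong) (auto simp: S_def)
    also have "\<dots> = (if i = 0 then 1 else c) * A $$ (i, l)"
      using i by simp
    also have "\<dots> = (\<Sum>k = 0..<m. (if k = i then B $$ (i, l) else 0) +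
        (if k = 0 \<and> i \<noteq> 0 then g i * B $$ (0, l) else 0))"
      using i l row0 rows[OF _ i l] by (simp add: sum.distrib)
    also have "\<dots> = (\<Sum>k = 0..<m. E $$ (i, k) * B $$ (k, l))"
      using i by (intro sum.cong) (auto simp: E_def)
    also have "\<dots> = (E * B) $$ (i, l)"
      using i l E B by (simp add: scalar_prod_def)
    finally show "(S * A) $$ (i, l) = (E * B) $$ (i, l)" .
  qed (use S A E B in auto)
  moreover have "det S = c ^ (m - 1)"
  proof -
    have "det S = (\<Prod>i = 0..<m. S $$ (i, i))"
      using det_lower_triangular[OF _ S] prod_list_diag_prod[of S] S by (simp add: S_def)
    also have "\<dots> = (\<Prod>i = 0..<m. if i = 0 then 1 else c)"
      by (simp add: S_def)
    also have "\<dots> = c ^ (m - 1)"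
      by (cases m) (simp_all add: prod.atLeast0_lessThan_Suc_shift del: prod.op_ivl_Suc)
    finally show ?thesis .
  qed
  moreover have "det E = 1"
    using det_lower_triangular[OF _ E] prod_list_diag_prod[of E] E by (simp add: E_def)
  ultimately show ?thesis
    using det_mult[OF S A] det_mult[OF E B] by simp
qed

lemma det_eq_0_iff_kernel:
  fixes A :: "'a::field mat"
  assumes A: "A \<in> carrier_mat n n"
  shows "det A = 0 \<longleftrightarrow> (\<exists>x. (\<exists>l<n. x l \<noteq> 0) \<and> (\<forall>i<n. (\<Sum>l<n. A $$ (i, l) * x l) = 0))"
proof -
  have mult_vec: "(A *\<^sub>v vec n x) $ i = (\<Sum>l<n. A $$ (i, l) * x l)" if "i < n" for x i
    using that A by (auto simp: scalar_prod_def lessThan_atLeast0 intro!: sum.cong)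
  show ?thesis
    unfolding det_0_iff_vec_prod_zero_field[OF A]
  proof
    assume "\<exists>v. v \<in> carrier_vec n \<and> v \<noteq> 0\<^sub>v n \<and> A *\<^sub>v v = 0\<^sub>v n"
    then obtain v where v: "v \<in> carrier_vec n" "v \<noteq> 0\<^sub>v n" "A *\<^sub>v v = 0\<^sub>v n"
      by blast
    then have "vec n (\<lambda>l. v $ l) = v"
      by auto
    moreover have "\<exists>l<n. v $ l \<noteq> 0"
      using v(1,2) by (auto intro!: eq_vecI)
    ultimately show "\<exists>x. (\<exists>l<n. x l \<noteq> 0) \<and> (\<forall>i<n. (\<Sum>l<n. A $$ (i, l) * x l) = 0)"
      using v(3) mult_vec[of _ "\<lambda>l. v $ l"] by (intro exI[of _ "\<lambda>l. v $ l"]) (metis index_zero_vec(1))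
  next
    assume "\<exists>x. (\<exists>l<n. x l \<noteq> 0) \<and> (\<forall>i<n. (\<Sum>l<n. A $$ (i, l) * x l) = 0)"
    then obtain x where "\<exists>l<n. x l \<noteq> 0" "\<forall>i<n. (\<Sum>l<n. A $$ (i, l) * x l) = 0"
      by blast
    then show "\<exists>v. v \<in> carrier_vec n \<and> v \<noteq> 0\<^sub>v n \<and> A *\<^sub>v v = 0\<^sub>v n"
      using A mult_vec by (intro exI[of _ "vec n x"]) (auto intro!: eq_vecI simp: vec_eq_iff)
  qed
qed

lemma det_eq_0_iff_left_kernel:
  fixes A :: "'a::field mat"
  assumes A: "A \<in> carrier_mat n n"
  shows "det A = 0 \<longleftrightarrow> (\<exists>y. (\<exists>i<n. y i \<noteq> 0) \<and> (\<forall>l<n. (\<Sum>i<n. y i * A $$ (i, l)) = 0))"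
proof -
  have "(\<Sum>i<n. transpose_mat A $$ (l, i) * y i) = (\<Sum>i<n. y i * A $$ (i, l))" if "l < n" for l y
    using that A by (intro sum.cong) auto
  then show ?thesis
    using det_eq_0_iff_kernel[of "transpose_mat A" n] det_transpose[OF A] A by auto
qed

section \<open>Nonvanishing of \<open>Delta\<close>\<close>

text \<open>top_factor_nonzero says that the factor in coeff_D_op_top (for d = w + 1) does not vanish,
  i.e. that D_op a b c raises degrees by exactly w + 1 when c > 0.\<close>

locale admissible_operator =
  fixes a b :: "'a::field_char_0 poly" and w :: nat
  assumes a_nonzero: "a \<noteq> 0"
    and degree_a_le: "degree a \<le> w + 2"
    and degree_b_le: "degree b \<le> w + 1"
    and top_factor_nonzero:
      "\<And>c s. 0 < c \<Longrightarrow> coeff a (w + 2) * of_nat (s + c * (w + 2)) + coeff b (w + 1) \<noteq> 0"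
    and coprime_a: "\<And>c. 0 < c \<Longrightarrow> coprime (smult (of_nat c) (pderiv a) + b) a"
begin

lemma degree_D_op_eq:
  assumes "0 < c" "q \<noteq> 0"
  shows "degree (D_op a b c q) = degree q + (w + 1)"
  using degree_D_op[of a "w + 1" b q c] degree_a_le degree_b_le top_factor_nonzero assms
  by (simp add: numeral_2_eq_2)

lemma D_op_nonzero:
  assumes "0 < c" "q \<noteq> 0"
  shows "D_op a b c q \<noteq> 0"
  using degree_D_op_eq[OF assms] by auto

lemma degree_D_op_monom: "degree (D_op a b 1 (monom 1 s)) = s + (w + 1)"
  using degree_D_op_eq[of 1 "monom 1 s"] by (simp add: degree_monom_eq)

lemma moments_eq_0_if_initial_eq_0:
  assumes annihilates: "\<And>q. moment_functional g (D_op a b 1 q) = 0"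
    and initial: "\<And>m. m \<le> w \<Longrightarrow> g m = 0"
  shows "g k = 0"
proof (induction k rule: less_induct)
  case (less k)
  show ?case
  proof (cases "k \<le> w")
    case False
    define Q where "Q = D_op a b 1 (monom 1 (k - w - 1))"
    have deg_Q: "degree Q = k"
      using False degree_D_op_monom[of "k - w - 1"] by (simp add: Q_def)
    with False have "lead_coeff Q \<noteq> 0"
      by auto
    have "0 = moment_functional g Q"
      using annihilates by (simp add: Q_def)
    also have "\<dots> = (\<Sum>i<k. g i * coeff Q i) + g k * lead_coeff Q"
      by (simp add: moment_functional_def deg_Q flip: lessThan_Suc_atMost)
    also have "(\<Sum>i<k. g i * coeff Q i) = 0"
      using less.IH by simp
    finally show ?thesis
      using \<open>lead_coeff Q \<noteq> 0\<close> by simp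
  qed (use initial in simp)
qed

lemma D_op_1_plus_low_degree: "\<exists>q r. p = D_op a b 1 q + r \<and> degree r \<le> w"
proof (induction "degree p" arbitrary: p rule: less_induct)
  case less
  show ?case
  proof (cases "degree p \<le> w")
    case True
    then show ?thesis
      by (intro exI[of _ 0] exI[of _ p]) simp
  next
    case False
    define Q where "Q = D_op a b 1 (monom 1 (degree p - w - 1))"
    define c where "c = lead_coeff p / coeff Q (degree p)"
    have deg_Q: "degree Q = degree p"
      using False degree_D_op_monom[of "degree p - w - 1"] by (simp add: Q_def)
    with False have "coeff Q (degree p) \<noteq> 0"
      by (metis leading_coeff_0_iff degree_0 le0)
    have "degree (p - smult c Q) < degree p"
    proof (rule degree_lessI)
      show "\<forall>k\<ge>degree p. coeff (p - smult c Q) k = 0"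
      proof (intro allI impI)
        fix k
        assume "degree p \<le> k"
        then consider "k = degree p" | "degree p < k"
          by linarith
        then show "coeff (p - smult c Q) k = 0"
          by cases (use deg_Q \<open>coeff Q (degree p) \<noteq> 0\<close> in \<open>auto simp: c_def coeff_eq_0\<close>)
      qed
    qed (use False in simp)
    then obtain q r where "p - smult c Q = D_op a b 1 q + r" "degree r \<le> w"
      using less by blast
    then have "p = D_op a b 1 (q + smult c (monom 1 (degree p - w - 1))) + r"
      by (simp add: Q_def D_op_add D_op_smult algebra_simps)
    with \<open>degree r \<le> w\<close> show ?thesis
      by blast
  qed
qed

lemma power_mult_eq_D_op_imp_eq_0:
  assumes "a ^ k * p = D_op a b c q" "0 < c" "degree p \<le> w"
  shows "p = 0"
  using assms
proof (induction k arbitrary: c q)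
  case 0
  show ?case
  proof (rule ccontr)
    assume "p \<noteq> 0"
    with 0 have "q \<noteq> 0"
      by auto
    with 0 have "degree p = degree q + (w + 1)"
      using degree_D_op_eq by simp
    with \<open>degree p \<le> w\<close> show False
      by simp
  qed
next
  case (Suc k)
  have "(smult (of_nat c) (pderiv a) + b) * q = a * (a ^ k * p - pderiv q)"
    using Suc.prems(1) by (simp add: D_op_def algebra_simps)
  then have "a dvd (smult (of_nat c) (pderiv a) + b) * q"
    by simp
  then have "a dvd q"
    by (rule coprime_dvd_mult_poly[OF coprime_a[OF Suc.prems(2)]])
  then obtain q' where q': "q = a * q'"
    by (elim dvdE)
  have "a * (a ^ k * p) = a * D_op a b (Suc c) q'"
    using Suc.prems(1) D_op_mult_power[of a b c 1 q'] by (simp add: q' mult.assoc)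
  with a_nonzero have "a ^ k * p = D_op a b (Suc c) q'"
    by simp
  with Suc.IH[of "Suc c" q'] Suc.prems(3) show ?case
    by simp
qed

lemma D_chain_nonzero_degree:
  assumes "0 < c" "q \<noteq> 0"
  shows "D_chain a b c k q \<noteq> 0 \<and> degree (D_chain a b c k q) = degree q + k * (w + 1)"
  using assms(2)
proof (induction k arbitrary: q)
  case (Suc k)
  have "D_op a b (c + k) q \<noteq> 0" "degree (D_op a b (c + k) q) = degree q + (w + 1)"
    using D_op_nonzero degree_D_op_eq assms(1) Suc.prems by auto
  with Suc.IH show ?case
    by simp
qed simp

lemma P_poly_nonzero: "P_poly a b n l \<noteq> 0"
  and degree_P_poly: "degree (P_poly a b n l) = l + n * (w + 1)"
  using D_chain_nonzero_degree[of 1 "monom 1 l" n]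
  by (simp_all add: P_poly_eq_D_chain[OF a_nonzero] degree_monom_eq)

lemma moment_functional_monom_mult_P_poly:
  assumes "\<And>q. moment_functional f (D_op a b 1 q) = 0" "s \<le> n"
  shows "moment_functional f (monom 1 s * P_poly a b n l) =
    (if s < n then 0 else (-1) ^ n * moment_functional f (a ^ n * monom 1 l))"
proof -
  have "moment_functional f (monom 1 s * P_poly a b n l) =
      inverse (fact n) * moment_functional f (monom 1 s * (a ^ 0 * D_chain a b (Suc 0) n (monom 1 l)))"
    by (simp add: P_poly_eq_D_chain[OF a_nonzero] moment_functional_smult mult_smult_right)
  also have "\<dots> = inverse (fact n) *
      ((-1) ^ n * moment_functional f ((pderiv ^^ n) (monom 1 s) * (a ^ n * monom 1 l)))"
    using moment_functional_mult_D_chain[OF assms(1), of "monom 1 s" 0 n] by simp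
  finally show ?thesis
    using assms(2) by (simp add: higher_pderiv_monom_1 moment_functional_smult)
qed

end

locale admissible_family = admissible_operator a b w for a b :: "'a::field_char_0 poly" and w :: nat +
  fixes f :: "nat \<Rightarrow> nat \<Rightarrow> 'a"
  assumes linearly_independent: "\<And>c :: nat \<Rightarrow> 'a. (\<forall>k. (\<Sum>j\<le>w. c j * f j k) = 0) \<Longrightarrow> \<forall>j\<le>w. c j = 0"
    and L_f_polynomial: "\<And>j. j \<le> w \<Longrightarrow> L_in_poly a b (f j)"
begin

lemma moment_functional_f_D_op: "j \<le> w \<Longrightarrow> moment_functional (f j) (D_op a b 1 q) = 0"
  using moment_functional_D_op_eq_0[OF L_f_polynomial] by blast

lemma low_degree_eq_0_if_moments_eq_0:
  assumes "degree r \<le> w" "\<And>j. j \<le> w \<Longrightarrow> moment_functional (f j) r = 0"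
  shows "r = 0"
proof (rule ccontr)
  assume "r \<noteq> 0"
  let ?C = "mat (w + 1) (w + 1) (\<lambda>(j, m). f j m)"
  have C: "?C \<in> carrier_mat (w + 1) (w + 1)"
    by simp
  have "\<exists>l<w + 1. coeff r l \<noteq> 0"
    using \<open>r \<noteq> 0\<close> assms(1) by (intro exI[of _ "degree r"]) simp
  moreover have "(\<Sum>l<w + 1. ?C $$ (j, l) * coeff r l) = 0" if "j < w + 1" for j
  proof -
    have "(\<Sum>l<w + 1. ?C $$ (j, l) * coeff r l) = moment_functional (f j) r"
      using that by (simp add: moment_functional_altdef[OF assms(1)] lessThan_Suc_atMost)
    with that assms(2) show ?thesis
      by simp
  qed
  ultimately have "det ?C = 0"
    unfolding det_eq_0_iff_kernel[OF C] by blast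
  then obtain y where y: "\<exists>i<w + 1. y i \<noteq> 0" "\<And>l. l < w + 1 \<Longrightarrow> (\<Sum>i<w + 1. y i * ?C $$ (i, l)) = 0"
    unfolding det_eq_0_iff_left_kernel[OF C] by blast
  define g where "g = (\<lambda>k. \<Sum>j\<le>w. y j * f j k)"
  have "g k = 0" for k
  proof (rule moments_eq_0_if_initial_eq_0)
    show "moment_functional g (D_op a b 1 q) = 0" for q
      unfolding g_def moment_functional_lincomb using moment_functional_f_D_op by simp
    show "g m = 0" if "m \<le> w" for m
      using y(2)[of m] that by (simp add: g_def lessThan_Suc_atMost)
  qed
  with linearly_independent[of y] y(1) show False
    by (auto simp: g_def lessThan_Suc_atMost)
qed

lemma power_mult_eq_0_if_moments_eq_0:
  assumes "degree p \<le> w" "\<And>j. j \<le> w \<Longrightarrow> moment_functional (f j) (a ^ n * p) = 0"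
  shows "p = 0"
proof -
  obtain q r where qr: "a ^ n * p = D_op a b 1 q + r" "degree r \<le> w"
    using D_op_1_plus_low_degree by blast
  have "moment_functional (f j) r = 0" if "j \<le> w" for j
    using assms(2)[OF that] moment_functional_f_D_op[OF that, of q]
    by (simp add: qr(1) moment_functional_add)
  then have "r = 0"
    using low_degree_eq_0_if_moments_eq_0[OF qr(2)] by blast
  with qr(1) have "a ^ n * p = D_op a b 1 q"
    by simp
  with assms(1) show ?thesis
    using power_mult_eq_D_op_imp_eq_0[of n p 1 q] by simp
qed

lemma coeff_P_poly_top:
  assumes "l \<le> w + 1" "(n + 1) * (w + 1) \<le> e"
  shows "coeff (P_poly a b n l) e =
    (if e = (n + 1) * (w + 1) \<and> l = w + 1 then lead_coeff (P_poly a b n (w + 1)) else 0)"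
proof -
  have "degree (P_poly a b n l) \<le> e" "degree (P_poly a b n l) = e \<longleftrightarrow> e = (n + 1) * (w + 1) \<and> l = w + 1"
    using assms by (auto simp: degree_P_poly algebra_simps)
  then show ?thesis
    by (auto simp: degree_P_poly coeff_eq_0 algebra_simps)
qed

lemma coeff_remainder_entry:
  assumes "j \<le> w" "l \<le> w + 1" "(n + 1) * (w + 1) \<le> e"
  shows "coeff (monom 1 ((n + 1) * (w + 2)) * Q_poly a b (f j) n l -
      series_trunc (f j) ((n + 1) * (w + 2)) * P_poly a b n l) e =
    (if e = (n + 1) * (w + 1) then (-1) ^ Suc n * moment_functional (f j) (a ^ n * monom 1 l) else 0)"
proof -
  define d where "d = (n + 1) * (w + 1)"
  have N: "(n + 1) * (w + 2) = d + n + 1"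
    by (simp add: d_def algebra_simps)
  have "degree (P_poly a b n l) \<le> e"
    using assms(2,3) by (simp add: degree_P_poly algebra_simps)
  then have "coeff (monom 1 ((n + 1) * (w + 2)) * Q_poly a b (f j) n l -
      series_trunc (f j) ((n + 1) * (w + 2)) * P_poly a b n l) e =
    (if e < d + n + 1 then - moment_functional (f j) (monom 1 (d + n - e) * P_poly a b n l) else 0)"
    unfolding Q_poly_def N by (subst coeff_remainder) simp_all
  also have "\<dots> = (if e = d then (-1) ^ Suc n * moment_functional (f j) (a ^ n * monom 1 l) else 0)"
    using moment_functional_monom_mult_P_poly[OF moment_functional_f_D_op[OF assms(1)], of "d + n - e" n l]
      assms(3) by (auto simp: d_def)
  finally show ?thesis
    by (simp add: d_def)
qed

lemma det_top_matrix_nonzero: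
  "det (mat (w + 2) (w + 2) (\<lambda>(i, l). if i = 0 then (if l = w + 1 then lead_coeff (P_poly a b n (w + 1)) else 0)
     else (-1) ^ Suc n * moment_functional (f (i - 1)) (a ^ n * monom 1 l))) \<noteq> 0"
  (is "det ?T \<noteq> 0")
proof
  assume "det ?T = 0"
  then obtain x where x: "\<exists>l<w + 2. x l \<noteq> 0" "\<And>i. i < w + 2 \<Longrightarrow> (\<Sum>l<w + 2. ?T $$ (i, l) * x l) = 0"
    unfolding det_eq_0_iff_kernel[of ?T "w + 2", OF mat_carrier] by blast
  have "(\<Sum>l<w + 2. ?T $$ (0, l) * x l) = lead_coeff (P_poly a b n (w + 1)) * x (w + 1)"
    by (simp add: numeral_2_eq_2 lessThan_Suc)
  with x(2)[of 0] P_poly_nonzero[of n "w + 1"] have x_last: "x (w + 1) = 0"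
    by simp
  define p where "p = (\<Sum>l\<le>w. monom (x l) l)"
  have coeff_p: "coeff p k = (if k \<le> w then x k else 0)" for k
    by (simp add: p_def coeff_sum coeff_monom)
  then have "degree p \<le> w"
    by (intro degree_le) auto
  moreover have "moment_functional (f j) (a ^ n * p) = 0" if "j \<le> w" for j
  proof -
    have "moment_functional (f j) (a ^ n * p) =
        (\<Sum>l\<le>w. x l * moment_functional (f j) (a ^ n * monom 1 l))"
      unfolding p_def sum_distrib_left moment_functional_sum
    proof (intro sum.cong refl)
      fix l
      have "a ^ n * monom (x l) l = smult (x l) (a ^ n * monom 1 l)"
        by (simp add: smult_monom flip: mult_smult_right)
      then show "moment_functional (f j) (a ^ n * monom (x l) l) =
          x l * moment_functional (f j) (a ^ n * monom 1 l)"
        by (simp add: moment_functional_smult)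
    qed
    also have "\<dots> = (-1) ^ Suc n * (\<Sum>l<w + 2. ?T $$ (Suc j, l) * x l)"
      using that x_last by (simp add: numeral_2_eq_2 lessThan_Suc_atMost sum_distrib_left ac_simps)
    also have "\<dots> = 0"
      using x(2)[of "Suc j"] that by simp
    finally show ?thesis .
  qed
  ultimately have "p = 0"
    by (rule power_mult_eq_0_if_moments_eq_0)
  have "x l = 0" if "l < w + 2" for l
  proof (cases "l \<le> w")
    case True
    then show ?thesis
      using coeff_p[of l] \<open>p = 0\<close> by simp
  next
    case False
    with that x_last show ?thesis
      by (simp add: not_le less_Suc_eq numeral_2_eq_2)
  qed
  with x(1) show False
    by blast
qed

lemma Delta_nonzero_constant: "Delta a b w f n \<noteq> 0 \<and> degree (Delta a b w f n) = 0"
proof -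
  define d where "d = (n + 1) * (w + 1)"
  define N where "N = (n + 1) * (w + 2)"
  define A where "A = mat (w + 2) (w + 2) (\<lambda>(i, l).
    if i = 0 then P_poly a b n l else Q_poly a b (f (i - 1)) n l)"
  define B where "B = mat (w + 2) (w + 2) (\<lambda>(i, l). if i = 0 then P_poly a b n l
    else monom 1 N * Q_poly a b (f (i - 1)) n l - series_trunc (f (i - 1)) N * P_poly a b n l)"
  define T where "T = mat (w + 2) (w + 2) (\<lambda>(i, l).
    if i = 0 then (if l = w + 1 then lead_coeff (P_poly a b n (w + 1)) else 0)
    else (-1) ^ Suc n * moment_functional (f (i - 1)) (a ^ n * monom 1 l))"
  have A: "A \<in> carrier_mat (w + 2) (w + 2)" and B: "B \<in> carrier_mat (w + 2) (w + 2)"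
    by (simp_all add: A_def B_def)
  have det_B: "det B = monom 1 (N * (w + 1)) * Delta a b w f n"
    using det_scale_rows_sub_first_row[OF A B, of "monom 1 N" "\<lambda>i. series_trunc (f (i - 1)) N"]
    by (simp add: A_def B_def Delta_def monom_power mult_monom)
  have coeff_B: "coeff (B $$ (i, l)) e = (if e = d then T $$ (i, l) else 0)"
    if "i < w + 2" "l < w + 2" "d \<le> e" for i l e
    using that coeff_P_poly_top[of l n e] coeff_remainder_entry[of "i - 1" l n e]
    by (auto simp: B_def T_def N_def d_def)
  have deg_B: "degree (B $$ (i, l)) \<le> d" if "i < w + 2" "l < w + 2" for i l
    using coeff_B[OF that] by (intro degree_le) auto
  have "map_mat (\<lambda>p. coeff p d) B = T"
    using B by (intro eq_matI) (auto simp: coeff_B T_def)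
  then have "coeff (det B) ((w + 2) * d) \<noteq> 0"
    using coeff_det_degree_bound[OF B deg_B] det_top_matrix_nonzero[of n] by (simp add: T_def)
  moreover have "degree (det B) \<le> (w + 2) * d"
    using degree_det_le[OF deg_B B] by (simp add: mult.commute)
  ultimately have "det B \<noteq> 0" "degree (det B) = (w + 2) * d"
    by (auto intro: le_antisym le_degree)
  moreover have "N * (w + 1) = (w + 2) * d"
    by (simp add: N_def d_def algebra_simps)
  ultimately show ?thesis
    unfolding det_B by (simp add: degree_mult_eq degree_monom_eq)
qed

end

lemma top_factor_nonzero_if_condition_b:
  fixes a b :: "'a::field_char_0 poly"
  assumes "a \<noteq> 0" "b \<noteq> 0" "int w = max (int (degree a) - 2) (int (degree b) - 1)"
    and "int (degree a) - 1 = int (degree b) \<Longrightarrow>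
      \<forall>k n::nat. lead_coeff a * of_nat ((k + 1) * degree a + n) + lead_coeff b \<noteq> 0"
    and "0 < c"
  shows "coeff a (w + 2) * of_nat (s + c * (w + 2)) + coeff b (w + 1) \<noteq> 0"
proof (cases "degree a = w + 2")
  case a_top: True
  show ?thesis
  proof (cases "degree b = w + 1")
    case True
    with a_top assms(4)[THEN spec, THEN spec, of "c - 1" s] assms(5) show ?thesis
      by (simp add: ac_simps)
  next
    case False
    then have "coeff b (w + 1) = 0"
      using assms(3) by (intro coeff_eq_0) linarith
    moreover have "coeff a (w + 2) \<noteq> 0"
      using a_top assms(1) by (metis leading_coeff_0_iff)
    moreover have "of_nat (s + c * (w + 2)) \<noteq> (0::'a)"
      using assms(5) by (simp only: of_nat_eq_0_iff) simp
    ultimately show ?thesis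
      by simp
  qed
next
  case False
  then have "coeff a (w + 2) = 0" "degree b = w + 1"
    using assms(3) by (simp_all add: coeff_eq_0)
  moreover from this(2) have "coeff b (w + 1) \<noteq> 0"
    using assms(2) by (metis leading_coeff_0_iff)
  ultimately show ?thesis
    by simp
qed

theorem theorem3p1:
  fixes a b :: "'a::field_char_0 poly" and w :: nat and f :: "nat \<Rightarrow> nat \<Rightarrow> 'a"
  assumes a_nz: "a \<noteq> 0" and b_nz: "b \<noteq> 0"
    and w_def: "int w = max (int (degree a) - 2) (int (degree b) - 1)"
    and cond0: "int (degree a) - 1 = int (degree b) \<Longrightarrow>
        \<forall>k::nat. lead_coeff a * (of_nat k + of_nat (degree a)) + lead_coeff b \<noteq> 0"
    and lin_indep: "\<And>c :: nat \<Rightarrow> 'a. (\<forall>k. (\<Sum>j\<le>w. c j * f j k) = 0) \<Longrightarrow> \<forall>j\<le>w. c j = 0"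
    and L_poly: "\<And>j. j \<le> w \<Longrightarrow> L_in_poly a b (f j)"
    and cond_a: "\<And>n::nat. n > 0 \<Longrightarrow> coprime (smult (of_nat n) (pderiv a) + b) a"
    and cond_b: "int (degree a) - 1 = int (degree b) \<Longrightarrow>
        \<forall>k n::nat. lead_coeff a * of_nat ((k + 1) * degree a + n) + lead_coeff b \<noteq> 0"
  shows "\<forall>n::nat. Delta a b w f n \<noteq> 0 \<and> degree (Delta a b w f n) = 0"
proof -
  have "degree a \<le> w + 2" "degree b \<le> w + 1"
    using w_def by linarith+
  then interpret admissible_family a b w f
    using a_nz top_factor_nonzero_if_condition_b[OF a_nz b_nz w_def cond_b] cond_a lin_indep L_poly
    by unfold_locales auto
  show ?thesis
    using Delta_nonzero_constant by blast
qed

end
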